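(* Let $P(z)=\sum_{j=0}^{n}a_jz^j$ be a complex polynomial of degree $n\ge 1$ (so $a_n\neq 0$), and let $a,b,c,u,v,w$ be arbitrary positive real numbers. Then every zero $z$ of $P$ satisfies $r_1\le |z|\le r_2$, where $$r_1=\frac{uv+2w}{uvw+w^2}\,\min_{1\le k\le n}\left\{\frac{(uvw+w^2)^n\,u^{\xi(k)}\,(uv)^{\lfloor k/2\rfloor}\,F_k^{(u,v,w)}\binom{n}{k}}{F_{4n}^{(u,v,w)}}\left|\frac{a_0}{a_k}\right|\right\}^{1/k},$$ $$r_2=\frac{abc+c^2}{ab+2c}\,\max_{1\le k\le n}\left\{\frac{F_{4n}^{(a,b,c)}}{(abc+c^2)^n\,a^{\xi(k)}\,(ab)^{\lfloor k/2\rfloor}\,F_k^{(a,b,c)}\binom{n}{k}}\left|\frac{a_{n-k}}{a_n}\right|\right\}^{1/k}.$$ (In the minimum defining $r_1$, indices $k$ with $a_k=0$ are omitted; since $a_n\neq0$ the minimum is over a nonempty set. In particular $r_1=0$ if $a_0=0$.)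
   Context: For positive real numbers $a,b,c$, the generalized Fibonacci numbers $F_m^{(a,b,c)}$ are defined by $F_0^{(a,b,c)}=0$, $F_1^{(a,b,c)}=1$, and for $m\ge 2$: $F_m^{(a,b,c)}=a\,F_{m-1}^{(a,b,c)}+c\,F_{m-2}^{(a,b,c)}$ if $m$ is even, and $F_m^{(a,b,c)}=b\,F_{m-1}^{(a,b,c)}+c\,F_{m-2}^{(a,b,c)}$ if $m$ is odd. For an integer $k$, $\lfloor k/2\rfloor$ denotes the floor of $k/2$ and $\xi(k):=k-2\lfloor k/2\rfloor$ (i.e. $0$ if $k$ is even, $1$ if $k$ is odd). *)

theory Defs
  imports Complex_Main "HOL-Computational_Algebra.Polynomial"
begin

fun gfib :: "real \<Rightarrow> real \<Rightarrow> real \<Rightarrow> nat \<Rightarrow> real" where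
  "gfib a b c 0 = 0"
| "gfib a b c (Suc 0) = 1"
| "gfib a b c (Suc (Suc m)) =
     (if even (Suc (Suc m)) then a else b) * gfib a b c (Suc m) + c * gfib a b c m"

definition xi :: "nat \<Rightarrow> nat" where
  "xi k = k - 2 * (k div 2)"

end

theory Submission
  imports Defs
begin

text \<open>
  Both bounds are weighted Cauchy bounds: if weights l_1, ..., l_n > 0 sum to at most 1 and
  |a_(n-k)| <= l_k |a_n| R^k for all k, then every zero satisfies |z| <= R; dually,
  |a_k| r^k <= l_k |a_0| for all k forces |z| >= r.  Suitable weights come from the identity
  sum_k (n choose k) G_k (ab + 2c)^k (abc + c^2)^(n-k) = F_(4n), where
  G_k = a^xi(k) (ab)^floor(k/2) F_k.  The sequence G obeys the parity-free recurrence
  G_(k+2) = ab G_(k+1) + abc G_k, so it has a Binet form in the roots x of x^2 = ab x + abc;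
  each such root satisfies x^4 = (ab)^2 ((ab + 2c) x + abc + c^2), and expanding
  x^(4n) binomially gives the identity.
\<close>

lemma real_root_power_mult:
  "0 < k \<Longrightarrow> 0 \<le> t \<Longrightarrow> root k (t ^ k * x) = t * root k x"
  by (simp add: real_root_mult real_root_power_cancel)

lemma Max_image_mult_left:
  fixes f :: "'a \<Rightarrow> real"
  assumes "finite A" "A \<noteq> {}" "0 \<le> c"
  shows "Max ((\<lambda>x. c * f x) ` A) = c * Max (f ` A)"
  using mono_Max_commute[of "(*) c" "f ` A"] assms by (simp add: image_image mono_def mult_left_mono)

lemma Min_image_mult_left:
  fixes f :: "'a \<Rightarrow> real"
  assumes "finite A" "A \<noteq> {}" "0 \<le> c"
  shows "Min ((\<lambda>x. c * f x) ` A) = c * Min (f ` A)"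
  using mono_Min_commute[of "(*) c" "f ` A"] assms by (simp add: image_image mono_def mult_left_mono)

lemma norm_root_le_if_coeffs_bounded:
  fixes P :: "'a::real_normed_field poly" and l :: "nat \<Rightarrow> real"
  assumes root: "poly P z = 0" and deg: "0 < degree P" and "0 \<le> R"
    and l_pos: "\<forall>k\<in>{1..degree P}. 0 < l k" and l_sum: "sum l {1..degree P} \<le> 1"
    and bound: "\<forall>k\<in>{1..degree P}. norm (coeff P (degree P - k)) \<le> l k * norm (lead_coeff P) * R ^ k"
  shows "norm z \<le> R"
proof (rule ccontr)
  define n where "n = degree P"
  define A where "A = norm (lead_coeff P)"
  assume "\<not> norm z \<le> R"
  then have R_less: "R < norm z" by simp
  have A_pos: "0 < A" using deg by (auto simp: A_def)
  have "poly P z = lead_coeff P * z ^ n + (\<Sum>i<n. coeff P i * z ^ i)"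
    by (simp add: poly_altdef n_def lessThan_Suc add.commute flip: lessThan_Suc_atMost)
  then have "A * norm z ^ n = norm (\<Sum>i<n. coeff P i * z ^ i)"
    using root by (metis A_def add_eq_0_iff norm_minus_cancel norm_mult norm_power)
  also have "\<dots> \<le> (\<Sum>i<n. norm (coeff P i) * norm z ^ i)"
    by (rule order_trans[OF norm_sum]) (simp add: norm_mult norm_power)
  also have "\<dots> = (\<Sum>k\<in>{1..n}. norm (coeff P (n - k)) * norm z ^ (n - k))"
    by (rule sum.reindex_bij_witness[of _ "\<lambda>k. n - k" "\<lambda>i. n - i"]) auto
  also have "\<dots> < (\<Sum>k\<in>{1..n}. l k * A * norm z ^ n)"
  proof (rule sum_strict_mono)
    fix k assume k: "k \<in> {1..n}"
    have "norm (coeff P (n - k)) * norm z ^ (n - k) \<le> l k * A * R ^ k * norm z ^ (n - k)"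
      using bound k by (intro mult_right_mono) (auto simp: n_def A_def)
    also have "\<dots> < l k * A * norm z ^ k * norm z ^ (n - k)"
      using k l_pos A_pos R_less \<open>0 \<le> R\<close>
      by (intro mult_strict_right_mono mult_strict_left_mono power_strict_mono zero_less_power)
        (auto simp: n_def)
    also have "\<dots> = l k * A * norm z ^ n"
      using k by (simp flip: power_add mult.assoc)
    finally show "norm (coeff P (n - k)) * norm z ^ (n - k) < l k * A * norm z ^ n" .
  qed (use deg in \<open>auto simp: n_def\<close>)
  also have "\<dots> \<le> A * norm z ^ n"
    using mult_right_mono[OF l_sum, of "A * norm z ^ n"] A_pos
    by (simp add: n_def mult.assoc flip: sum_distrib_right)
  finally show False by simp
qed

lemma norm_root_ge_if_coeffs_bounded:
  fixes P :: "'a::real_normed_field poly" and l :: "nat \<Rightarrow> real"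
  assumes root: "poly P z = 0" and deg: "0 < degree P"
    and l_sum: "sum l {1..degree P} \<le> 1"
    and bound: "\<forall>k\<in>{1..degree P}. norm (coeff P k) * r ^ k \<le> l k * norm (coeff P 0)"
  shows "r \<le> norm z"
proof (rule ccontr)
  define n where "n = degree P"
  assume "\<not> r \<le> norm z"
  then have z_less: "norm z < r" by simp
  have "poly P z = coeff P 0 + (\<Sum>k\<in>{1..n}. coeff P k * z ^ k)"
    by (simp add: poly_altdef n_def atMost_atLeast0 sum.atLeast_Suc_atMost)
  then have "norm (coeff P 0) = norm (\<Sum>k\<in>{1..n}. coeff P k * z ^ k)"
    using root by (metis add_eq_0_iff norm_minus_cancel)
  also have "\<dots> \<le> (\<Sum>k\<in>{1..n}. norm (coeff P k) * norm z ^ k)"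
    by (rule order_trans[OF norm_sum]) (simp add: norm_mult norm_power)
  also have "\<dots> < (\<Sum>k\<in>{1..n}. l k * norm (coeff P 0))"
  proof (rule sum_strict_mono_ex1)
    have "norm (coeff P k) * norm z ^ k \<le> norm (coeff P k) * r ^ k" for k
      using z_less by (intro mult_left_mono power_mono) auto
    then show "\<forall>k\<in>{1..n}. norm (coeff P k) * norm z ^ k \<le> l k * norm (coeff P 0)"
      using bound by (auto simp: n_def intro: order_trans)
    have "norm (lead_coeff P) * norm z ^ n < norm (lead_coeff P) * r ^ n"
      using deg z_less by (intro mult_strict_left_mono power_strict_mono) (auto simp: n_def)
    moreover have "n \<in> {1..n}" using deg by (simp add: n_def)
    ultimately show "\<exists>k\<in>{1..n}. norm (coeff P k) * norm z ^ k < l k * norm (coeff P 0)"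
      using bound by (force simp: n_def)
  qed simp
  also have "\<dots> \<le> norm (coeff P 0)"
    using mult_right_mono[OF l_sum norm_ge_zero] by (simp add: n_def flip: sum_distrib_right)
  finally show False by simp
qed

lemma norm_root_le_Max_root:
  fixes P :: "'a::real_normed_field poly" and l :: "nat \<Rightarrow> real"
  assumes root: "poly P z = 0" and deg: "0 < degree P"
    and l_pos: "\<forall>k\<in>{1..degree P}. 0 < l k" and l_sum: "sum l {1..degree P} \<le> 1"
  shows "norm z \<le>
    Max ((\<lambda>k. root k (norm (coeff P (degree P - k) / lead_coeff P) / l k)) ` {1..degree P})"
    (is "_ \<le> Max (?f ` _)")
proof -
  define M where "M = Max (?f ` {1..degree P})"
  have f_le_M: "?f k \<le> M" if "k \<in> {1..degree P}" for k
    using that by (auto simp: M_def intro: Max_ge)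
  have f_nonneg: "0 \<le> ?f k" if "k \<in> {1..degree P}" for k
    using that l_pos by (intro real_root_ge_zero divide_nonneg_pos) auto
  have "0 \<le> M"
    using order_trans[OF f_nonneg f_le_M, of 1] deg by simp
  moreover have "\<forall>k\<in>{1..degree P}. norm (coeff P (degree P - k)) \<le> l k * norm (lead_coeff P) * M ^ k"
  proof
    fix k assume k: "k \<in> {1..degree P}"
    have "norm (coeff P (degree P - k) / lead_coeff P) / l k = ?f k ^ k"
      using k l_pos by (intro real_root_pow_pos2[symmetric] divide_nonneg_pos) auto
    also have "\<dots> \<le> M ^ k"
      using k f_le_M f_nonneg by (intro power_mono) auto
    finally have "norm (coeff P (degree P - k)) / (l k * norm (lead_coeff P)) \<le> M ^ k"
      by (simp add: norm_divide mult.commute)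
    moreover have "0 < l k * norm (lead_coeff P)"
      using k l_pos deg by (auto intro!: mult_pos_pos)
    ultimately show "norm (coeff P (degree P - k)) \<le> l k * norm (lead_coeff P) * M ^ k"
      by (simp add: pos_divide_le_eq mult_ac)
  qed
  ultimately show ?thesis
    unfolding M_def by (rule norm_root_le_if_coeffs_bounded[OF root deg _ l_pos l_sum])
qed

lemma norm_root_ge_Min_root:
  fixes P :: "'a::real_normed_field poly" and l :: "nat \<Rightarrow> real"
  assumes root: "poly P z = 0" and deg: "0 < degree P"
    and l_nonneg: "\<forall>k\<in>{1..degree P}. 0 \<le> l k" and l_sum: "sum l {1..degree P} \<le> 1"
  shows "Min ((\<lambda>k. root k (l k * norm (coeff P 0 / coeff P k))) `
      {k \<in> {1..degree P}. coeff P k \<noteq> 0}) \<le> norm z"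
    (is "Min (?f ` ?S) \<le> _")
proof (rule norm_root_ge_if_coeffs_bounded[OF root deg l_sum])
  let ?m = "Min (?f ` ?S)"
  have "degree P \<in> ?S" using deg by auto
  then have m_nonneg: "0 \<le> ?m"
    using l_nonneg by (auto intro!: Min.boundedI real_root_ge_zero)
  show "\<forall>k\<in>{1..degree P}. norm (coeff P k) * ?m ^ k \<le> l k * norm (coeff P 0)"
  proof
    fix k assume k: "k \<in> {1..degree P}"
    show "norm (coeff P k) * ?m ^ k \<le> l k * norm (coeff P 0)"
    proof (cases "coeff P k = 0")
      case True
      then show ?thesis using k l_nonneg by simp
    next
      case False
      then have "?m ^ k \<le> ?f k ^ k"
        using k m_nonneg by (intro power_mono Min_le) auto
      also have "\<dots> = l k * norm (coeff P 0 / coeff P k)"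
        using k l_nonneg by (intro real_root_pow_pos2) auto
      also have "\<dots> = l k * norm (coeff P 0) / norm (coeff P k)"
        by (simp add: norm_divide)
      finally show ?thesis using False by (simp add: le_divide_eq mult.commute)
    qed
  qed
qed

lemma linear_recurrence_closed_form:
  fixes G :: "nat \<Rightarrow> 'a::comm_ring_1"
  assumes rec: "\<And>m. G (Suc (Suc m)) = (x + y) * G (Suc m) - x * y * G m" and "G 0 = 0"
  shows "G k * (x - y) = G 1 * (x ^ k - y ^ k)"
proof (induction k rule: induct_nat_012)
  case (ge2 m)
  have "G (Suc (Suc m)) * (x - y) = (x + y) * (G (Suc m) * (x - y)) - x * y * (G m * (x - y))"
    by (simp add: rec algebra_simps)
  also have "\<dots> = (x + y) * (G 1 * (x ^ Suc m - y ^ Suc m)) - x * y * (G 1 * (x ^ m - y ^ m))"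
    by (simp only: ge2.IH)
  also have "\<dots> = G 1 * (x ^ Suc (Suc m) - y ^ Suc (Suc m))"
    by (simp add: algebra_simps)
  finally show ?case .
qed (simp_all add: \<open>G 0 = 0\<close>)

lemma gfib_pos:
  assumes "0 < a" "0 < b" "0 < c" "0 < k"
  shows "0 < gfib a b c k"
  using assms(4)
proof (induction k rule: induct_nat_012)
  case (ge2 m)
  have "0 \<le> gfib a b c m" using ge2.IH(1) by (cases m) auto
  then show ?case using ge2.IH(2) assms(1-3) by (auto intro: add_pos_nonneg)
qed simp_all

definition gfib_uniform :: "real \<Rightarrow> real \<Rightarrow> real \<Rightarrow> nat \<Rightarrow> real" where
  "gfib_uniform a b c k = a ^ xi k * (a * b) ^ (k div 2) * gfib a b c k"

lemma gfib_uniform_Suc_Suc: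
  "gfib_uniform a b c (Suc (Suc m)) = a * b * gfib_uniform a b c (Suc m) + a * b * c * gfib_uniform a b c m"
proof (cases "even m")
  case True
  then obtain j where "m = 2 * j" by (rule evenE)
  moreover have "xi (Suc (Suc (2 * j))) = 0" "xi (Suc (2 * j)) = 1" "xi (2 * j) = 0"
    by (simp_all add: xi_def)
  ultimately show ?thesis by (simp add: gfib_uniform_def algebra_simps)
next
  case False
  then obtain j where "m = Suc (2 * j)" by (metis oddE Suc_eq_plus1)
  moreover have "xi (Suc (Suc (Suc (2 * j)))) = 1" "xi (Suc (Suc (2 * j))) = 0" "xi (Suc (2 * j)) = 1"
    by (simp_all add: xi_def)
  ultimately show ?thesis by (simp add: gfib_uniform_def algebra_simps)
qed

lemma gfib_uniform_closed_form:
  assumes "x + y = a * b" and "x * y = - (a * b * c)"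
  shows "gfib_uniform a b c k * (x - y) = a * (x ^ k - y ^ k)"
proof -
  have "gfib_uniform a b c (Suc (Suc m))
      = (x + y) * gfib_uniform a b c (Suc m) - x * y * gfib_uniform a b c m" for m
    using assms by (simp add: gfib_uniform_Suc_Suc)
  moreover have "gfib_uniform a b c 0 = 0" "gfib_uniform a b c 1 = a"
    by (simp_all add: gfib_uniform_def xi_def)
  ultimately show ?thesis
    using linear_recurrence_closed_form[of "gfib_uniform a b c" x y k] by simp
qed

lemma power_4n_binomial:
  fixes r a b c :: real
  assumes "r ^ 2 = a * b * r + a * b * c"
  shows "r ^ (4 * n) = (a * b) ^ (2 * n)
    * (\<Sum>k\<le>n. real (n choose k) * (a * b + 2 * c) ^ k * (a * b * c + c ^ 2) ^ (n - k) * r ^ k)"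
proof -
  have "r ^ 4 = (a * b * r + a * b * c) ^ 2"
    using assms by (metis power_mult numeral_Bit0 mult_2)
  also have "\<dots> = (a * b) ^ 2 * r ^ 2 + 2 * (a * b) * (a * b * c) * r + (a * b * c) ^ 2"
    by (simp add: power2_eq_square algebra_simps)
  also have "\<dots> = (a * b) ^ 2 * ((a * b + 2 * c) * r + (a * b * c + c ^ 2))"
    unfolding assms by (simp add: power2_eq_square algebra_simps)
  finally have "r ^ (4 * n) = (a * b) ^ (2 * n) * ((a * b + 2 * c) * r + (a * b * c + c ^ 2)) ^ n"
    by (simp add: power_mult power_mult_distrib)
  then show ?thesis
    by (simp add: binomial_ring power_mult_distrib mult_ac)
qed

lemma gfib_uniform_binomial_sum:
  assumes "0 < a" "0 < b" "0 < c"
  shows "(\<Sum>k\<in>{1..n}. real (n choose k) * gfib_uniform a b c k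
            * (a * b + 2 * c) ^ k * (a * b * c + c ^ 2) ^ (n - k)) = gfib a b c (4 * n)"
proof -
  define s t where "s = a * b" and "t = a * b * c"
  define d where "d = sqrt (s ^ 2 + 4 * t)"
  define x y where "x = (s + d) / 2" and "y = (s - d) / 2"
  define C where "C = (\<lambda>k. real (n choose k) * (a * b + 2 * c) ^ k * (a * b * c + c ^ 2) ^ (n - k))"
  have "0 < s" "0 < t" using assms by (simp_all add: s_def t_def)
  then have d_sq: "d ^ 2 = s ^ 2 + 4 * t" and "0 < d" by (simp_all add: d_def add_pos_pos)
  then have "x \<noteq> y" by (simp add: x_def y_def)
  have "((s + e) / 2) ^ 2 - s * ((s + e) / 2) - t = (e ^ 2 - s ^ 2 - 4 * t) / 4" for e
    by (simp add: power2_eq_square field_simps)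
  from this[of d] this[of "- d"] d_sq have "x ^ 2 = s * x + t" "y ^ 2 = s * y + t"
    by (simp_all add: x_def y_def)
  then have x_4n: "x ^ (4 * n) = s ^ (2 * n) * (\<Sum>k\<le>n. C k * x ^ k)"
    and y_4n: "y ^ (4 * n) = s ^ (2 * n) * (\<Sum>k\<le>n. C k * y ^ k)"
    by (simp_all add: power_4n_binomial C_def s_def t_def)
  have "x + y = a * b" "x * y = - (a * b * c)"
    using d_sq by (simp_all add: x_def y_def s_def t_def power2_eq_square field_simps)
  note closed = gfib_uniform_closed_form[OF this]
  have "s ^ (2 * n) * gfib a b c (4 * n) * (x - y) = a * (x ^ (4 * n) - y ^ (4 * n))"
    using closed[of "4 * n"] by (simp add: gfib_uniform_def xi_def s_def power_mult)
  also have "\<dots> = s ^ (2 * n) * (\<Sum>k\<le>n. C k * (a * (x ^ k - y ^ k)))"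
    unfolding x_4n y_4n by (simp add: sum_distrib_left sum_subtractf[symmetric] algebra_simps)
  also have "\<dots> = s ^ (2 * n) * (\<Sum>k\<le>n. C k * gfib_uniform a b c k) * (x - y)"
    by (simp add: sum_distrib_left sum_distrib_right closed[symmetric] mult_ac)
  finally have "gfib a b c (4 * n) = (\<Sum>k\<le>n. C k * gfib_uniform a b c k)"
    using \<open>0 < s\<close> \<open>x \<noteq> y\<close> by simp
  also have "\<dots> = (\<Sum>k\<in>{1..n}. C k * gfib_uniform a b c k)"
    by (simp add: atMost_atLeast0 sum.atLeast_Suc_atMost gfib_uniform_def)
  finally show ?thesis by (simp add: C_def mult_ac)
qed

definition gfib_weight :: "real \<Rightarrow> real \<Rightarrow> real \<Rightarrow> nat \<Rightarrow> nat \<Rightarrow> real" where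
  "gfib_weight a b c n k = real (n choose k) * gfib_uniform a b c k
     * (a * b + 2 * c) ^ k * (a * b * c + c ^ 2) ^ (n - k) / gfib a b c (4 * n)"

lemma gfib_weight_pos:
  assumes "0 < a" "0 < b" "0 < c" "k \<in> {1..n}"
  shows "0 < gfib_weight a b c n k"
  using assms gfib_pos[OF assms(1-3)]
  by (auto simp: gfib_weight_def gfib_uniform_def intro!: divide_pos_pos mult_pos_pos add_pos_pos zero_less_power)

lemma sum_gfib_weight:
  assumes "0 < a" "0 < b" "0 < c" "0 < n"
  shows "sum (gfib_weight a b c n) {1..n} = 1"
  using gfib_uniform_binomial_sum[OF assms(1-3)] gfib_pos[OF assms(1-3), of "4 * n"] assms(4)
  by (simp add: gfib_weight_def flip: sum_divide_distrib)

lemma gfib_weight_eq_power: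
  assumes "0 < a" "0 < b" "0 < c" "k \<in> {1..n}"
  shows "gfib_weight a b c n k = ((a * b + 2 * c) / (a * b * c + c ^ 2)) ^ k
    * ((a * b * c + c ^ 2) ^ n * a ^ xi k * (a * b) ^ (k div 2) * gfib a b c k
       * real (n choose k) / gfib a b c (4 * n))"
proof -
  have "(a * b * c + c ^ 2) ^ n = (a * b * c + c ^ 2) ^ k * (a * b * c + c ^ 2) ^ (n - k)"
    using assms(4) by (simp flip: power_add)
  moreover have "0 < a * b * c + c ^ 2" using assms by (simp add: add_pos_pos)
  ultimately show ?thesis
    by (simp add: gfib_weight_def gfib_uniform_def power_divide field_simps)
qed

lemma gfib_weight_roots:
  assumes "0 < a" "0 < b" "0 < c" "k \<in> {1..n}"
  defines "X \<equiv> (a*b*c + c^2) ^ n * a ^ xi k * (a*b) ^ (k div 2) * gfib a b c k * real (n choose k)"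
  shows "root k (y / gfib_weight a b c n k)
           = (a*b*c + c^2) / (a*b + 2*c) * root k (gfib a b c (4 * n) / X * y)"
    and "root k (gfib_weight a b c n k * y)
           = (a*b + 2*c) / (a*b*c + c^2) * root k (X / gfib a b c (4 * n) * y)"
proof -
  define p q where "p = a*b + 2*c" and "q = a*b*c + c^2"
  have "0 < p" "0 < q" using assms(1-3) by (simp_all add: p_def q_def add_pos_pos)
  have "0 < X" using assms gfib_pos[OF assms(1-3), of k] by (simp add: X_def add_pos_pos)
  have "0 < gfib a b c (4 * n)" using assms by (intro gfib_pos) auto
  have w: "gfib_weight a b c n k = (p / q) ^ k * (X / gfib a b c (4 * n))"
    using gfib_weight_eq_power[OF assms(1-4)] by (simp add: X_def p_def q_def)
  have "0 < k" using assms(4) by simp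
  show "root k (y / gfib_weight a b c n k) = q / p * root k (gfib a b c (4 * n) / X * y)"
    unfolding w using \<open>0 < p\<close> \<open>0 < q\<close> \<open>0 < X\<close> \<open>0 < k\<close>
    by (simp add: real_root_power_mult[symmetric] power_divide field_simps)
  show "root k (gfib_weight a b c n k * y) = p / q * root k (X / gfib a b c (4 * n) * y)"
    unfolding w mult.assoc using \<open>0 < p\<close> \<open>0 < q\<close> \<open>0 < k\<close>
    by (intro real_root_power_mult) simp_all
qed

lemma norm_root_le_gfib_bound:
  fixes P :: "'a::real_normed_field poly"
  assumes root: "poly P z = 0" and deg: "0 < degree P" and abc: "0 < a" "0 < b" "0 < c"
  shows "norm z \<le> (a*b*c + c^2) / (a*b + 2*c) *
           Max ((\<lambda>k. root k (gfib a b c (4 * degree P) /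
                   ((a*b*c + c^2) ^ degree P * a ^ xi k * (a*b) ^ (k div 2)
                    * gfib a b c k * real (degree P choose k))
                   * norm (coeff P (degree P - k) / coeff P (degree P))))
                ` {1..degree P})"
    (is "_ \<le> ?s * Max (?f ` ?K)")
proof -
  have "norm z \<le> Max ((\<lambda>k. root k (norm (coeff P (degree P - k) / lead_coeff P)
                          / gfib_weight a b c (degree P) k)) ` ?K)"
    using gfib_weight_pos[OF abc] sum_gfib_weight[OF abc deg]
    by (intro norm_root_le_Max_root[OF root deg]) auto
  also have "\<dots> = Max ((\<lambda>k. ?s * ?f k) ` ?K)"
    using gfib_weight_roots(1)[OF abc] by (intro arg_cong[where f = Max] image_cong refl) auto
  also have "\<dots> = ?s * Max (?f ` ?K)"
    using deg abc by (intro Max_image_mult_left) (auto simp: add_pos_pos)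
  finally show ?thesis .
qed

lemma norm_root_ge_gfib_bound:
  fixes P :: "'a::real_normed_field poly"
  assumes root: "poly P z = 0" and deg: "0 < degree P" and abc: "0 < a" "0 < b" "0 < c"
  shows "(a*b + 2*c) / (a*b*c + c^2) *
           Min ((\<lambda>k. root k ((a*b*c + c^2) ^ degree P * a ^ xi k * (a*b) ^ (k div 2)
                   * gfib a b c k * real (degree P choose k) / gfib a b c (4 * degree P)
                   * norm (coeff P 0 / coeff P k)))
                ` {k \<in> {1..degree P}. coeff P k \<noteq> 0})
         \<le> norm z"
    (is "?s * Min (?f ` ?K) \<le> _")
proof -
  have "degree P \<in> ?K" using deg by auto
  then have "?s * Min (?f ` ?K) = Min ((\<lambda>k. ?s * ?f k) ` ?K)"
    using abc by (intro Min_image_mult_left[symmetric]) (auto simp: add_pos_pos)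
  also have "\<dots> = Min ((\<lambda>k. root k (gfib_weight a b c (degree P) k * norm (coeff P 0 / coeff P k))) ` ?K)"
    using gfib_weight_roots(2)[OF abc] by (intro arg_cong[where f = Min] image_cong refl) auto
  also have "\<dots> \<le> norm z"
    using gfib_weight_pos[OF abc] sum_gfib_weight[OF abc deg]
    by (intro norm_root_ge_Min_root[OF root deg]) (auto intro: less_imp_le)
  finally show ?thesis .
qed

theorem theorem1:
  fixes P :: "complex poly" and a b c u v w :: real and z :: complex
  assumes "degree P \<ge> 1"
    and "a > 0" "b > 0" "c > 0" "u > 0" "v > 0" "w > 0"
    and "poly P z = 0"
  shows "(u*v + 2*w) / (u*v*w + w^2) *
           Min ((\<lambda>k. root k ((u*v*w + w^2) ^ degree P * u ^ xi k * (u*v) ^ (k div 2)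
                   * gfib u v w k * real (degree P choose k) / gfib u v w (4 * degree P)
                   * cmod (coeff P 0 / coeff P k)))
                ` {k \<in> {1..degree P}. coeff P k \<noteq> 0})
         \<le> cmod z
       \<and> cmod z \<le>
         (a*b*c + c^2) / (a*b + 2*c) *
           Max ((\<lambda>k. root k (gfib a b c (4 * degree P) /
                   ((a*b*c + c^2) ^ degree P * a ^ xi k * (a*b) ^ (k div 2)
                    * gfib a b c k * real (degree P choose k))
                   * cmod (coeff P (degree P - k) / coeff P (degree P))))
                ` {1..degree P})"
proof -
  have deg: "0 < degree P" using assms(1) by simp
  show ?thesis
    using norm_root_ge_gfib_bound[OF assms(8) deg assms(5-7)]
      norm_root_le_gfib_bound[OF assms(8) deg assms(2-4)] by blast
qed

end
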